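(* Let $p$ be odd, $R$ a Noetherian Banach–Tate $\mathbb{Z}_p$-algebra with multiplicative pseudo-uniformizer $\varpi$, and assume there is no $x\in R$ with $1<|x|<|\varpi|^{-1}$. Let $r\in[1/p,1)$, $t\ge1$, and let $f:\bigoplus_{i=1}^t\mathcal{D}^r\to\bigoplus_{i=1}^t\mathcal{D}^{r^{1/p}}$ be a norm-decreasing $R$-linear map, $\iota:\bigoplus_{i=1}^t\mathcal{D}^{r^{1/p}}\hookrightarrow\bigoplus_{i=1}^t\mathcal{D}^r$ the natural inclusion, and $U=\iota\circ f$ (a compact endomorphism of $M=\bigoplus_{i=1}^t\mathcal{D}^r$). Then $U(e^i_{r,\alpha})=\sum_{j,\beta}a^j_\beta e^j_{r,\beta}$ with $|a^j_\beta|\le|\varpi|^{n(r,\varpi,\beta)-n(r^{1/p},\varpi,\beta)}$ for all $j,\beta$. Moreover, defining $\lambda(0)=0$ and $\lambda(i+1)=\lambda(i)+n(r,\varpi,\lfloor i/t\rfloor)-n(r^{1/p},\varpi,\lfloor i/t\rfloor)$, the Fredholm determinant $\det(1-TU\mid M)=\sum_{n\ge0}c_nT^n\in R\{\{T\}\}$ satisfies $|c_n|\le|\varpi|^{\lambda(n)}$ for all $n$.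
   Context: A Banach–Tate $\mathbb{Z}_p$-algebra is a complete non-archimedean normed ring $R$ with a unit $\varpi$, $|\varpi|<1$, $|\varpi s|=|\varpi||s|$ for all $s$, and a ring map $\mathbb{Z}_p\to R$ with $|x|\le|x|_p$. For $s\in[1/p,1)$, $\mathcal{D}^s=\mathcal{D}^s(\mathbb{Z}_p,R)=\{\sum_{\alpha\ge0}d_\alpha\mathbf{n}^\alpha: d_\alpha\in R,\ |d_\alpha|s^\alpha\to0\}$ with norm $\sup_\alpha|d_\alpha|s^\alpha$, where $\mathbf{n}=\delta_1-1$ in the distribution algebra of $\mathbb{Z}_p$ (completion of the continuous $R$-valued distributions on $\mathbb{Z}_p$); $\mathcal{D}^{r^{1/p}}\subseteq\mathcal{D}^r$ naturally. Put $n(s,\varpi,\alpha)=\lfloor\alpha\log s/\log|\varpi|\rfloor$ and $e_{s,\alpha}=\varpi^{-n(s,\varpi,\alpha)}\mathbf{n}^\alpha$, a potential orthonormal basis of $\mathcal{D}^s$; $e^i_{s,\alpha}\in\bigoplus_{i=1}^t\mathcal{D}^s$ is $e_{s,\alpha}$ in the $i$-th summand. The basis of $M$ is ordered $e^1_{r,0},\dots,e^t_{r,0},e^1_{r,1},\dots$ (so the row indexed $i\ge0$ corresponds to $\alpha=\lfloor i/t\rfloor$). The Fredholm determinant of a compact operator on a potentially orthonormalizable Banach module is $\sum c_nT^n$ where $c_n=(-1)^n\sum$ of all principal $n\times n$ minors of the matrix of the operator in a potential orthonormal basis. *)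

theory Defs
  imports Complex_Main "HOL-Combinatorics.Permutations" "HOL-Computational_Algebra.Primes"
begin

definition padic_abs :: "nat \<Rightarrow> int \<Rightarrow> real" where
  "padic_abs p n = (if n = 0 then 0 else (1 / real p) ^ multiplicity (int p) n)"

definition is_ideal :: "'a::comm_ring_1 set \<Rightarrow> bool" where
  "is_ideal I \<longleftrightarrow> 0 \<in> I \<and> (\<forall>x\<in>I. \<forall>y\<in>I. x + y \<in> I) \<and> (\<forall>c. \<forall>x\<in>I. c * x \<in> I)"

definition noetherian :: "'a::comm_ring_1 itself \<Rightarrow> bool" where
  "noetherian _ \<longleftrightarrow> (\<forall>I::'a set. is_ideal I \<longrightarrow>
     (\<exists>F. finite F \<and> F \<subseteq> I \<and> I = {\<Sum>x\<in>F. c x * x | c. True}))"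

definition nonarch_normed_ring :: "('a::comm_ring_1 \<Rightarrow> real) \<Rightarrow> bool" where
  "nonarch_normed_ring nrm \<longleftrightarrow>
     (\<forall>x. 0 \<le> nrm x) \<and> (\<forall>x. nrm x = 0 \<longleftrightarrow> x = 0) \<and> (\<forall>x. nrm (- x) = nrm x) \<and>
     (\<forall>x y. nrm (x + y) \<le> max (nrm x) (nrm y)) \<and> (\<forall>x y. nrm (x * y) \<le> nrm x * nrm y)"

definition complete_nrm :: "('a::comm_ring_1 \<Rightarrow> real) \<Rightarrow> bool" where
  "complete_nrm nrm \<longleftrightarrow> (\<forall>X::nat \<Rightarrow> 'a.
     (\<forall>e>0. \<exists>N. \<forall>m\<ge>N. \<forall>n\<ge>N. nrm (X m - X n) < e) \<longrightarrow>
     (\<exists>L. (\<lambda>n. nrm (X n - L)) \<longlonglongrightarrow> 0))"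

(* A ring map Z_p -> R with |x| <= |x|_p exists (uniquely) iff
   |of_int n| <= |n|_p for all integers n (by completeness and density of Z). *)
definition banach_tate_Zp_alg :: "nat \<Rightarrow> ('a::comm_ring_1 \<Rightarrow> real) \<Rightarrow> 'a \<Rightarrow> bool" where
  "banach_tate_Zp_alg p nrm w \<longleftrightarrow>
     nonarch_normed_ring nrm \<and> complete_nrm nrm \<and>
     w dvd 1 \<and> nrm w < 1 \<and> (\<forall>s. nrm (w * s) = nrm w * nrm s) \<and>
     (\<forall>n::int. nrm (of_int n) \<le> padic_abs p n)"

definition uinv :: "'a::comm_ring_1 \<Rightarrow> 'a" where
  "uinv w = (SOME v. w * v = 1)"

definition ncoef :: "('a \<Rightarrow> real) \<Rightarrow> real \<Rightarrow> 'a \<Rightarrow> nat \<Rightarrow> int" where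
  "ncoef nrm s w \<alpha> = \<lfloor>real \<alpha> * ln s / ln (nrm w)\<rfloor>"

(* t-fold direct sum of D^s: element x i alpha = coefficient of n^alpha in summand i (0 <= i < t) *)
definition Dsum :: "('a::comm_ring_1 \<Rightarrow> real) \<Rightarrow> real \<Rightarrow> nat \<Rightarrow> (nat \<Rightarrow> nat \<Rightarrow> 'a) set" where
  "Dsum nrm s t = {x. (\<forall>i\<ge>t. \<forall>\<alpha>. x i \<alpha> = 0) \<and>
                      (\<forall>i<t. (\<lambda>\<alpha>. nrm (x i \<alpha>) * s ^ \<alpha>) \<longlonglongrightarrow> 0)}"

definition Dnorm :: "('a::comm_ring_1 \<Rightarrow> real) \<Rightarrow> real \<Rightarrow> nat \<Rightarrow> (nat \<Rightarrow> nat \<Rightarrow> 'a) \<Rightarrow> real" where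
  "Dnorm nrm s t x = Sup ({0} \<union> {nrm (x i \<alpha>) * s ^ \<alpha> | i \<alpha>. i < t})"

(* e^i_{s,alpha} = w^{-n(s,w,alpha)} n^alpha in the i-th summand *)
definition ebasis :: "('a::comm_ring_1 \<Rightarrow> real) \<Rightarrow> real \<Rightarrow> 'a \<Rightarrow> nat \<Rightarrow> nat \<Rightarrow> nat \<Rightarrow> nat \<Rightarrow> 'a" where
  "ebasis nrm s w i \<alpha> = (\<lambda>j \<beta>. if j = i \<and> \<beta> = \<alpha> then uinv w ^ nat (ncoef nrm s w \<alpha>) else 0)"

definition Rlinear_on :: "(nat \<Rightarrow> nat \<Rightarrow> 'a::comm_ring_1) set \<Rightarrow>
    ((nat \<Rightarrow> nat \<Rightarrow> 'a) \<Rightarrow> (nat \<Rightarrow> nat \<Rightarrow> 'a)) \<Rightarrow> bool" where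
  "Rlinear_on A f \<longleftrightarrow>
     (\<forall>x\<in>A. \<forall>y\<in>A. f (\<lambda>i \<alpha>. x i \<alpha> + y i \<alpha>) = (\<lambda>i \<alpha>. f x i \<alpha> + f y i \<alpha>)) \<and>
     (\<forall>c. \<forall>x\<in>A. f (\<lambda>i \<alpha>. c * x i \<alpha>) = (\<lambda>i \<alpha>. c * f x i \<alpha>))"

(* matrix of U in the basis e_{r,.} ordered e^1_{r,0},...,e^t_{r,0},e^1_{r,1},...;
   index k <-> summand k mod t, alpha = k div t. Entry (k,l) = coefficient of
   basis vector k in U(basis vector l). *)
definition Umat :: "('a::comm_ring_1 \<Rightarrow> real) \<Rightarrow> real \<Rightarrow> 'a \<Rightarrow> nat \<Rightarrow>
    ((nat \<Rightarrow> nat \<Rightarrow> 'a) \<Rightarrow> (nat \<Rightarrow> nat \<Rightarrow> 'a)) \<Rightarrow> nat \<Rightarrow> nat \<Rightarrow> 'a" where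
  "Umat nrm r w t U k l =
     U (ebasis nrm r w (l mod t) (l div t)) (k mod t) (k div t) * w ^ nat (ncoef nrm r w (k div t))"

definition pminor :: "(nat \<Rightarrow> nat \<Rightarrow> 'a::comm_ring_1) \<Rightarrow> nat set \<Rightarrow> 'a" where
  "pminor A S = (\<Sum>\<pi> | \<pi> permutes S. of_int (sign \<pi>) * (\<Prod>k\<in>S. A k (\<pi> k)))"

definition nrm_has_sum :: "('a::comm_ring_1 \<Rightarrow> real) \<Rightarrow> ('b \<Rightarrow> 'a) \<Rightarrow> 'b set \<Rightarrow> 'a \<Rightarrow> bool" where
  "nrm_has_sum nrm g A s \<longleftrightarrow> (\<forall>e>0. \<exists>F. finite F \<and> F \<subseteq> A \<and>
     (\<forall>G. finite G \<and> F \<subseteq> G \<and> G \<subseteq> A \<longrightarrow> nrm ((\<Sum>x\<in>G. g x) - s) < e))"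

definition is_fredholm_coeff :: "('a::comm_ring_1 \<Rightarrow> real) \<Rightarrow> (nat \<Rightarrow> nat \<Rightarrow> 'a) \<Rightarrow> nat \<Rightarrow> 'a \<Rightarrow> bool" where
  "is_fredholm_coeff nrm A n c \<longleftrightarrow>
     (\<exists>s. nrm_has_sum nrm (pminor A) {S. finite S \<and> card S = n} s \<and> c = (-1) ^ n * s)"

fun lam :: "('a \<Rightarrow> real) \<Rightarrow> real \<Rightarrow> nat \<Rightarrow> nat \<Rightarrow> 'a \<Rightarrow> nat \<Rightarrow> int" where
  "lam nrm r p t w 0 = 0"
| "lam nrm r p t w (Suc i) = lam nrm r p t w i + ncoef nrm r w (i div t)
      - ncoef nrm (r powr (1 / real p)) w (i div t)"

end

theory Submission
  imports Defs
begin

(* Write W = |w|. The basis vector e_{s,b} = w^(-n(s,b)) n^b is normalised so that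
   W^(n(s,b)+1) < s^b <= W^n(s,b). Hence e_{r,a} has norm at most 1 in D^r, so f(e_{r,a}) has
   norm at most 1 in D^s with s = r^(1/p), and its coefficient y at n^b satisfies
   |w^n(s,b) y| < 1/W; the gap hypothesis forces |w^n(s,b) y| <= 1, which is the entry bound.
   So row k of the matrix of U is bounded by W^(g k) with g k = n(r, k div t) - n(s, k div t), and
   g is increasing and unbounded because n(s,b) is roughly n(r,b)/p. By the ultrametric inequality
   the principal minor on an index set S is bounded by W^(sum of g over S), which is at most
   W^lambda(card S) and tends to 0 as max S grows; by completeness the sum of the n x n principal
   minors converges, with the same bound. *)

lemma floor_divide_diff_le:
  fixes u v :: real and p :: nat
  assumes "u \<le> v" "1 \<le> p"
  shows "\<lfloor>v / p\<rfloor> - \<lfloor>u / p\<rfloor> \<le> \<lfloor>v\<rfloor> - \<lfloor>u\<rfloor>"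
proof -
  define m k where "m = \<lfloor>v / p\<rfloor>" and "k = \<lfloor>u / p\<rfloor>"
  have p: "0 < real p" using assms(2) by simp
  have "k \<le> m" unfolding m_def k_def using assms(1) p by (intro floor_mono divide_right_mono) auto
  moreover have "\<lfloor>u\<rfloor> \<le> \<lfloor>v\<rfloor>" using assms(1) floor_mono by blast
  moreover have "m - k \<le> \<lfloor>v\<rfloor> - \<lfloor>u\<rfloor>" if "k < m"
  proof -
    have "real_of_int m \<le> v / p" unfolding m_def by simp
    then have "real_of_int (int p * m) \<le> v" using p by (simp add: field_simps)
    then have upper: "int p * m \<le> \<lfloor>v\<rfloor>" by (meson le_floor_iff)
    have "u / p < real_of_int k + 1" unfolding k_def by linarith
    then have "u < real_of_int (int p * (k + 1))" using p by (simp add: field_simps)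
    then have lower: "\<lfloor>u\<rfloor> < int p * (k + 1)" by (meson floor_less_iff)
    have "1 * (m - k - 1) \<le> int p * (m - k - 1)"
      using that assms(2) by (intro mult_right_mono) auto
    then have "m - k - 1 \<le> int p * m - int p * k - int p" by (simp add: algebra_simps)
    then show ?thesis using upper lower by (simp add: algebra_simps)
  qed
  ultimately have "m - k \<le> \<lfloor>v\<rfloor> - \<lfloor>u\<rfloor>" by force
  then show ?thesis unfolding m_def k_def .
qed

lemma mono_floor_diff_floor_divide:
  fixes a :: real and p :: nat
  assumes "0 \<le> a" "1 \<le> p"
  shows "mono (\<lambda>\<beta>::nat. \<lfloor>\<beta> * a\<rfloor> - \<lfloor>\<beta> * a / p\<rfloor>)"
proof (rule incseq_SucI)
  fix \<beta>
  show "\<lfloor>\<beta> * a\<rfloor> - \<lfloor>\<beta> * a / p\<rfloor> \<le> \<lfloor>Suc \<beta> * a\<rfloor> - \<lfloor>Suc \<beta> * a / p\<rfloor>"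
    using floor_divide_diff_le[of "\<beta> * a" "Suc \<beta> * a" p] assms by (simp add: distrib_right)
qed

lemma floor_diff_floor_divide_unbounded:
  fixes a :: real and p :: nat
  assumes "0 < a" "2 \<le> p"
  shows "\<exists>\<beta>::nat. M \<le> \<lfloor>\<beta> * a\<rfloor> - \<lfloor>\<beta> * a / p\<rfloor>"
proof
  define \<beta> where "\<beta> = nat \<lceil>2 * (M + 1) / a\<rceil>"
  have "2 * (M + 1) / a \<le> \<beta>" unfolding \<beta>_def by linarith
  then have "M + 1 \<le> \<beta> * a / 2" using assms(1) by (simp add: field_simps)
  moreover have "\<beta> * a / p \<le> \<beta> * a / 2"
    using assms by (intro divide_left_mono) auto
  ultimately show "M \<le> \<lfloor>\<beta> * a\<rfloor> - \<lfloor>\<beta> * a / p\<rfloor>" by linarith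
qed

lemma sum_lessThan_le_sum_card:
  fixes g :: "nat \<Rightarrow> int"
  assumes "mono g" "finite S" "card S = n"
  shows "(\<Sum>k<n. g k) \<le> sum g S"
  using assms(2,3)
proof (induction n arbitrary: S)
  case (Suc n)
  define m where "m = Max S"
  have "S \<noteq> {}" using Suc.prems by auto
  then have "m \<in> S" unfolding m_def using Suc.prems(1) by simp
  have "S \<subseteq> {..m}" unfolding m_def using Suc.prems(1) by auto
  then have "card S \<le> Suc m" using card_mono[OF finite_atMost] by fastforce
  then have "n \<le> m" using Suc.prems(2) by simp
  have "(\<Sum>k<Suc n. g k) = (\<Sum>k<n. g k) + g n" by simp
  also have "\<dots> \<le> sum g (S - {m}) + g m"
    using Suc.IH[of "S - {m}"] Suc.prems \<open>m \<in> S\<close> \<open>n \<le> m\<close> assms(1)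
    by (intro add_mono) (auto simp: monoD)
  also have "\<dots> = sum g S" using Suc.prems(1) \<open>m \<in> S\<close> by (simp add: sum.remove)
  finally show ?case .
qed simp

lemma power_int_tendsto_0:
  fixes W :: real and g :: "nat \<Rightarrow> int"
  assumes "0 < W" "W < 1" "mono g" "\<And>M. \<exists>N. M \<le> g N"
  shows "(\<lambda>N. W powi g N) \<longlonglongrightarrow> 0"
proof (rule LIMSEQ_I)
  fix e :: real assume "0 < e"
  obtain K where K: "W ^ K < e" using real_arch_pow_inv[OF \<open>0 < e\<close> assms(2)] by blast
  obtain N0 where "int K \<le> g N0" using assms(4) by blast
  have "W powi g N < e" if "N0 \<le> N" for N
  proof -
    have "int K \<le> g N" using \<open>int K \<le> g N0\<close> assms(3) that by (meson monoD order_trans)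
    then have "W powi g N \<le> W powi int K" using assms(1,2) by (intro power_int_decreasing) auto
    then show ?thesis using K by simp
  qed
  then show "\<exists>N0. \<forall>N\<ge>N0. norm (W powi g N - 0) < e" using assms(1) by auto
qed

lemma Dnorm_ge_entry:
  assumes "x \<in> Dsum nrm s t" "j < t"
  shows "nrm (x j \<beta>) * s ^ \<beta> \<le> Dnorm nrm s t x"
proof -
  have "{nrm (x i \<alpha>) * s ^ \<alpha> | i \<alpha>. i < t} = (\<Union>i<t. range (\<lambda>\<alpha>. nrm (x i \<alpha>) * s ^ \<alpha>))"
    by auto
  moreover have "bdd_above (range (\<lambda>\<alpha>. nrm (x i \<alpha>) * s ^ \<alpha>))" if "i < t" for i
  proof -
    have "(\<lambda>\<alpha>. nrm (x i \<alpha>) * s ^ \<alpha>) \<longlonglongrightarrow> 0" using assms(1) that by (simp add: Dsum_def)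
    then show ?thesis by (intro Bseq_bdd_above convergent_imp_Bseq convergentI)
  qed
  ultimately have "bdd_above ({0} \<union> {nrm (x i \<alpha>) * s ^ \<alpha> | i \<alpha>. i < t})" by simp
  then show ?thesis unfolding Dnorm_def using assms(2) by (intro cSup_upper) auto
qed

lemma power_int_sum:
  fixes x :: "'a::field"
  assumes "x \<noteq> 0"
  shows "x powi (sum g S) = (\<Prod>k\<in>S. x powi g k)"
  by (induction S rule: infinite_finite_induct) (simp_all add: power_int_add assms)

locale nonarch_norm =
  fixes nrm :: "'a::comm_ring_1 \<Rightarrow> real"
  assumes nonarch_normed_ring: "nonarch_normed_ring nrm"
begin

lemma nrm_nonneg: "0 \<le> nrm x"
  and nrm_eq_0_iff: "nrm x = 0 \<longleftrightarrow> x = 0"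
  and nrm_minus: "nrm (- x) = nrm x"
  and nrm_add_le_max: "nrm (x + y) \<le> max (nrm x) (nrm y)"
  and nrm_mult_le: "nrm (x * y) \<le> nrm x * nrm y"
  using nonarch_normed_ring unfolding nonarch_normed_ring_def by blast+

lemma nrm_zero [simp]: "nrm 0 = 0"
  by (simp add: nrm_eq_0_iff)

lemma ebasis_in_Dsum:
  assumes "i < t"
  shows "ebasis nrm s w i \<alpha> \<in> Dsum nrm s t"
  unfolding Dsum_def
proof (intro CollectI conjI allI impI)
  fix j \<beta> assume "t \<le> j"
  then show "ebasis nrm s w i \<alpha> j \<beta> = 0" using assms by (simp add: ebasis_def)
next
  fix j
  have "\<forall>\<^sub>F \<beta> in sequentially. nrm (ebasis nrm s w i \<alpha> j \<beta>) * s ^ \<beta> = 0"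
    by (rule eventually_sequentiallyI[of "Suc \<alpha>"]) (simp add: ebasis_def)
  then show "(\<lambda>\<beta>. nrm (ebasis nrm s w i \<alpha> j \<beta>) * s ^ \<beta>) \<longlonglongrightarrow> 0"
    by (rule tendsto_eventually)
qed

lemma nrm_minus_commute: "nrm (x - y) = nrm (y - x)"
  by (metis minus_diff_eq nrm_minus)

lemma nrm_sum_le:
  assumes "finite A" "0 \<le> B" "\<And>x. x \<in> A \<Longrightarrow> nrm (h x) \<le> B"
  shows "nrm (sum h A) \<le> B"
  using assms(1,3)
proof (induction A rule: finite_induct)
  case (insert a A)
  then have "nrm (h a) \<le> B" "nrm (sum h A) \<le> B" by auto
  then show ?case using nrm_add_le_max[of "h a" "sum h A"] insert.hyps by simp
qed (simp add: assms(2))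

lemma nrm_prod_le:
  assumes "nrm 1 \<le> 1" "finite S"
  shows "nrm (prod h S) \<le> (\<Prod>k\<in>S. nrm (h k))"
  using assms(2)
proof (induction S rule: finite_induct)
  case (insert a S)
  have "nrm (h a * prod h S) \<le> nrm (h a) * nrm (prod h S)" by (rule nrm_mult_le)
  also have "\<dots> \<le> nrm (h a) * (\<Prod>k\<in>S. nrm (h k))"
    using insert.IH by (simp add: mult_left_mono nrm_nonneg)
  finally show ?case using insert.hyps by simp
qed (simp add: assms(1))

lemma nrm_pminor_le:
  assumes "nrm 1 \<le> 1" "finite S" "\<And>k l. k \<in> S \<Longrightarrow> nrm (A k l) \<le> b k"
  shows "nrm (pminor A S) \<le> (\<Prod>k\<in>S. b k)"
  unfolding pminor_def
proof (rule nrm_sum_le)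
  show "finite {\<pi>. \<pi> permutes S}" using assms(2) by (rule finite_permutations)
  show "0 \<le> prod b S" using assms(3) nrm_nonneg by (meson order_trans prod_nonneg)
  fix \<pi> assume "\<pi> \<in> {\<pi>. \<pi> permutes S}"
  have "nrm (of_int (sign \<pi>) * (\<Prod>k\<in>S. A k (\<pi> k))) = nrm (\<Prod>k\<in>S. A k (\<pi> k))"
    by (cases "evenperm \<pi>") (auto simp: sign_def nrm_minus)
  also have "\<dots> \<le> (\<Prod>k\<in>S. nrm (A k (\<pi> k)))" using assms(1,2) by (rule nrm_prod_le)
  also have "\<dots> \<le> prod b S" using assms(3) by (intro prod_mono) (auto simp: nrm_nonneg)
  finally show "nrm (of_int (sign \<pi>) * (\<Prod>k\<in>S. A k (\<pi> k))) \<le> prod b S" .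
qed

lemma nrm_has_sum_nrm_le:
  assumes "nrm_has_sum nrm h A L" "\<And>x. x \<in> A \<Longrightarrow> nrm (h x) \<le> B" "0 \<le> B"
  shows "nrm L \<le> B"
proof (rule ccontr)
  assume "\<not> nrm L \<le> B"
  then obtain F where F: "finite F" "F \<subseteq> A"
    and close: "\<And>G. finite G \<and> F \<subseteq> G \<and> G \<subseteq> A \<Longrightarrow> nrm (sum h G - L) < nrm L - B"
    using assms(1) unfolding nrm_has_sum_def by (meson diff_gt_0_iff_gt not_le)
  have "nrm (sum h F - L) < nrm L - B" using F by (intro close) simp
  have "nrm (sum h F) \<le> B" using F(1,2) assms(2,3) by (intro nrm_sum_le) auto
  moreover have "nrm L \<le> max (nrm (sum h F)) (nrm (sum h F - L))"
    using nrm_add_le_max[of "sum h F" "L - sum h F"] nrm_minus_commute[of L "sum h F"] by simp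
  ultimately show False using \<open>nrm (sum h F - L) < nrm L - B\<close> \<open>\<not> nrm L \<le> B\<close> assms(3)
    unfolding le_max_iff_disj by linarith
qed

lemma nrm_has_sum_exhausting:
  assumes complete: "complete_nrm nrm"
    and F: "\<And>N. finite (F N)" "\<And>N. F N \<subseteq> A" "mono F"
    and eps: "eps \<longlonglongrightarrow> 0" "\<And>N. 0 \<le> eps N"
    and tail: "\<And>N x. x \<in> A - F N \<Longrightarrow> nrm (h x) \<le> eps N"
  shows "\<exists>L. nrm_has_sum nrm h A L"
proof -
  define T where "T N = sum h (F N)" for N
  have nrm_sum_tail: "nrm (sum h G) \<le> eps N" if "finite G" "G \<subseteq> A - F N" for G N
    using that eps(2) tail by (intro nrm_sum_le) auto
  have step: "nrm (T M - T N) \<le> eps N" if "N \<le> M" for N M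
  proof -
    have "T M - T N = sum h (F M - F N)"
      unfolding T_def using that F by (simp add: sum_diff monoD)
    then show ?thesis using F by (simp add: nrm_sum_tail Diff_mono)
  qed
  have small: "\<forall>\<^sub>F N in sequentially. eps N < e" if "0 < e" for e
    using order_tendstoD(2)[OF eps(1) that] .
  have "\<forall>e>0. \<exists>N. \<forall>m\<ge>N. \<forall>n\<ge>N. nrm (T m - T n) < e"
  proof (intro allI impI)
    fix e :: real assume "0 < e"
    then obtain N where N: "\<And>n. N \<le> n \<Longrightarrow> eps n < e"
      using small unfolding eventually_sequentially by blast
    have "nrm (T m - T n) < e" if "N \<le> m" "N \<le> n" for m n
    proof (cases "n \<le> m")
      case True
      then show ?thesis using step[of n m] N[of n] that by simp
    next
      case False
      then show ?thesis using step[of m n] N[of m] that nrm_minus_commute[of "T m" "T n"] by simp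
    qed
    then show "\<exists>N. \<forall>m\<ge>N. \<forall>n\<ge>N. nrm (T m - T n) < e" by blast
  qed
  then obtain L where L: "(\<lambda>N. nrm (T N - L)) \<longlonglongrightarrow> 0"
    using complete unfolding complete_nrm_def by blast
  have "nrm_has_sum nrm h A L"
    unfolding nrm_has_sum_def
  proof (intro allI impI)
    fix e :: real assume "0 < e"
    then have "\<forall>\<^sub>F N in sequentially. nrm (T N - L) < e \<and> eps N < e"
      using order_tendstoD(2)[OF L] small by (auto intro: eventually_conj)
    then obtain N where N: "nrm (T N - L) < e" "eps N < e"
      unfolding eventually_sequentially by blast
    have "nrm (sum h G - L) < e" if G: "finite G" "F N \<subseteq> G" "G \<subseteq> A" for G
    proof -
      have "sum h G - L = (T N - L) + sum h (G - F N)"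
        unfolding T_def using G F(1) by (simp add: sum.subset_diff[of "F N" G])
      then have "nrm (sum h G - L) \<le> max (nrm (T N - L)) (nrm (sum h (G - F N)))"
        by (simp only: nrm_add_le_max)
      moreover have "nrm (sum h (G - F N)) \<le> eps N" using G by (intro nrm_sum_tail) auto
      ultimately show ?thesis using N by linarith
    qed
    then show "\<exists>F. finite F \<and> F \<subseteq> A \<and> (\<forall>G. finite G \<and> F \<subseteq> G \<and> G \<subseteq> A \<longrightarrow> nrm (sum h G - L) < e)"
      using F(1,2)[of N] by (intro exI[of _ "F N"]) auto
  qed
  then show ?thesis ..
qed

end

locale tate_norm = nonarch_norm +
  fixes w :: "'a::comm_ring_1"
  assumes complete: "complete_nrm nrm"
    and w_dvd_one: "w dvd 1"
    and nrm_w_less_one: "nrm w < 1"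
    and nrm_mult_w: "\<And>x. nrm (w * x) = nrm w * nrm x"
    and nontrivial: "(1::'a) \<noteq> 0"
begin

lemma w_mult_uinv: "w * uinv w = 1"
proof -
  obtain v where "w * v = 1" using w_dvd_one by (metis dvdE)
  then show ?thesis unfolding uinv_def by (rule someI)
qed

lemma nrm_w_pos: "0 < nrm w"
  using w_mult_uinv nontrivial nrm_nonneg[of w] nrm_eq_0_iff[of w] by force

lemma ln_nrm_w_neg: "ln (nrm w) < 0"
  using nrm_w_pos nrm_w_less_one by simp

lemma nrm_one: "nrm 1 = 1"
  using nrm_mult_w[of 1] nrm_w_pos by simp

lemma nrm_w_power_mult: "nrm (w ^ k * x) = nrm w ^ k * nrm x"
  by (induction k) (simp_all add: nrm_mult_w mult.assoc)

lemma nrm_uinv_power: "nrm (uinv w ^ k) = 1 / nrm w ^ k"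
proof -
  have "nrm w ^ k * nrm (uinv w ^ k) = 1"
    using nrm_w_power_mult[of k "uinv w ^ k"]
    by (simp add: power_mult_distrib[symmetric] w_mult_uinv nrm_one)
  then show ?thesis using nrm_w_pos by (simp add: field_simps)
qed

lemma ncoef_nonneg:
  assumes "0 < s" "s \<le> 1"
  shows "0 \<le> ncoef nrm s w \<beta>"
proof -
  have "0 \<le> real \<beta> * ln s / ln (nrm w)"
    using assms ln_nrm_w_neg by (intro divide_nonpos_neg mult_nonneg_nonpos) auto
  then show ?thesis unfolding ncoef_def by simp
qed

lemma ncoef_bounds:
  assumes "0 < s"
  shows "nrm w powi (ncoef nrm s w \<beta> + 1) < s ^ \<beta>"
    and "s ^ \<beta> \<le> nrm w powi ncoef nrm s w \<beta>"
proof -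
  define z where "z = real \<beta> * ln s / ln (nrm w)"
  have powi_exp: "nrm w powi k = exp (of_int k * ln (nrm w))" for k
    using nrm_w_pos by (metis exp_ln exp_power_int)
  have "s ^ \<beta> = exp (real \<beta> * ln s)" using assms by (simp add: exp_of_nat_mult)
  also have "real \<beta> * ln s = z * ln (nrm w)" unfolding z_def using ln_nrm_w_neg by simp
  finally have s: "s ^ \<beta> = exp (z * ln (nrm w))" .
  have n: "ncoef nrm s w \<beta> = \<lfloor>z\<rfloor>" unfolding ncoef_def z_def ..
  have "(\<lfloor>z\<rfloor> + 1) * ln (nrm w) < z * ln (nrm w)"
    using ln_nrm_w_neg by (intro mult_strict_right_mono_neg) linarith+
  then show "nrm w powi (ncoef nrm s w \<beta> + 1) < s ^ \<beta>" unfolding n s powi_exp by simp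
  have "z * ln (nrm w) \<le> \<lfloor>z\<rfloor> * ln (nrm w)"
    using ln_nrm_w_neg by (intro mult_right_mono_neg) auto
  then show "s ^ \<beta> \<le> nrm w powi ncoef nrm s w \<beta>" unfolding n s powi_exp by simp
qed

lemma Dnorm_ebasis_le_one:
  assumes "0 < s" "s \<le> 1"
  shows "Dnorm nrm s t (ebasis nrm s w i \<alpha>) \<le> 1"
  unfolding Dnorm_def
proof (rule cSup_least)
  have entry: "nrm (ebasis nrm s w i \<alpha> j \<beta>) * s ^ \<beta> \<le> 1" for j \<beta>
  proof (cases "j = i \<and> \<beta> = \<alpha>")
    case True
    have "s ^ \<alpha> \<le> nrm w ^ nat (ncoef nrm s w \<alpha>)"
      using ncoef_bounds(2)[OF assms(1)] ncoef_nonneg[OF assms] by (simp add: power_int_def)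
    then show ?thesis using True nrm_w_pos by (simp add: ebasis_def nrm_uinv_power field_simps)
  qed (auto simp: ebasis_def)
  fix y assume "y \<in> {0} \<union> {nrm (ebasis nrm s w i \<alpha> j \<beta>) * s ^ \<beta> |j \<beta>. j < t}"
  then show "y \<le> 1" using entry by auto
qed auto

lemma nrm_coeff_le_powi_ncoef:
  assumes gap: "\<not> (\<exists>x. 1 < nrm x \<and> nrm x < 1 / nrm w)"
    and s: "0 < s" "s \<le> 1"
    and y: "y \<in> Dsum nrm s t" "Dnorm nrm s t y \<le> 1" and "j < t"
  shows "nrm (y j \<beta>) \<le> nrm w powi - ncoef nrm s w \<beta>"
proof -
  define m where "m = nat (ncoef nrm s w \<beta>)"
  have "nrm w * nrm w ^ m < s ^ \<beta>"
    using ncoef_bounds(1)[OF s(1), of \<beta>] ncoef_nonneg[OF s, of \<beta>] nrm_w_pos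
    by (simp add: m_def power_int_def nat_add_distrib)
  moreover have "nrm (y j \<beta>) * s ^ \<beta> \<le> 1"
    using Dnorm_ge_entry[OF y(1) \<open>j < t\<close>, of \<beta>] y(2) by linarith
  have "nrm (w ^ m * y j \<beta>) * nrm w < 1"
  proof (cases "y j \<beta> = 0")
    case False
    then have "nrm (y j \<beta>) * (nrm w * nrm w ^ m) < nrm (y j \<beta>) * s ^ \<beta>"
      using \<open>nrm w * nrm w ^ m < s ^ \<beta>\<close> nrm_nonneg[of "y j \<beta>"] nrm_eq_0_iff[of "y j \<beta>"]
      by (intro mult_strict_left_mono) auto
    moreover have "nrm (w ^ m * y j \<beta>) * nrm w = nrm (y j \<beta>) * (nrm w * nrm w ^ m)"
      by (simp add: nrm_w_power_mult ac_simps)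
    ultimately show ?thesis using \<open>nrm (y j \<beta>) * s ^ \<beta> \<le> 1\<close> by linarith
  qed simp
  then have "nrm (w ^ m * y j \<beta>) < 1 / nrm w"
    using nrm_w_pos by (simp add: field_simps)
  then have "nrm w ^ m * nrm (y j \<beta>) \<le> 1"
    using gap not_less nrm_w_power_mult by metis
  moreover have "ncoef nrm s w \<beta> = int m" using ncoef_nonneg[OF s, of \<beta>] by (simp add: m_def)
  ultimately show ?thesis using nrm_w_pos by (simp add: power_int_minus field_simps)
qed

lemma nrm_image_ebasis_coeff_le:
  assumes gap: "\<not> (\<exists>x. 1 < nrm x \<and> nrm x < 1 / nrm w)"
    and r: "0 < r" "r \<le> 1" and s: "0 < s" "s \<le> 1"
    and maps: "\<forall>x\<in>Dsum nrm r t. f x \<in> Dsum nrm s t"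
    and contracts: "\<forall>x\<in>Dsum nrm r t. Dnorm nrm s t (f x) \<le> Dnorm nrm r t x"
    and "i < t" "j < t"
  shows "nrm (f (ebasis nrm r w i \<alpha>) j \<beta> * w ^ nat (ncoef nrm r w \<beta>))
    \<le> nrm w powi (ncoef nrm r w \<beta> - ncoef nrm s w \<beta>)"
proof -
  define x where "x = ebasis nrm r w i \<alpha>"
  have x: "x \<in> Dsum nrm r t" "Dnorm nrm r t x \<le> 1"
    unfolding x_def using ebasis_in_Dsum[OF \<open>i < t\<close>] Dnorm_ebasis_le_one[OF r] by auto
  then have "f x \<in> Dsum nrm s t" "Dnorm nrm s t (f x) \<le> 1"
    using maps contracts by fastforce+
  then have "nrm (f x j \<beta>) \<le> nrm w powi - ncoef nrm s w \<beta>"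
    by (rule nrm_coeff_le_powi_ncoef[OF gap s _ _ \<open>j < t\<close>])
  have npow: "nrm w ^ nat (ncoef nrm r w \<beta>) = nrm w powi ncoef nrm r w \<beta>"
    using ncoef_nonneg[OF r] by (simp add: power_int_def)
  have "nrm (f x j \<beta> * w ^ nat (ncoef nrm r w \<beta>)) = nrm w powi ncoef nrm r w \<beta> * nrm (f x j \<beta>)"
    by (simp add: npow[symmetric] nrm_w_power_mult mult.commute[of _ "w ^ _"])
  also have "\<dots> \<le> nrm w powi ncoef nrm r w \<beta> * nrm w powi - ncoef nrm s w \<beta>"
    using \<open>nrm (f x j \<beta>) \<le> _\<close> nrm_w_pos by (intro mult_left_mono) simp_all
  also have "\<dots> = nrm w powi (ncoef nrm r w \<beta> - ncoef nrm s w \<beta>)"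
    using nrm_w_pos by (simp add: power_int_diff power_int_minus divide_inverse)
  finally show ?thesis unfolding x_def .
qed

lemma ncoef_diff_eq:
  assumes "0 < r"
  shows "ncoef nrm r w \<beta> - ncoef nrm (r powr (1 / real p)) w \<beta>
    = \<lfloor>\<beta> * (ln r / ln (nrm w))\<rfloor> - \<lfloor>\<beta> * (ln r / ln (nrm w)) / p\<rfloor>"
  using assms by (simp add: ncoef_def mult.commute)

lemma mono_ncoef_diff:
  assumes "0 < r" "r < 1" "1 \<le> p"
  shows "mono (\<lambda>\<beta>. ncoef nrm r w \<beta> - ncoef nrm (r powr (1 / real p)) w \<beta>)"
  unfolding ncoef_diff_eq[OF assms(1)] using assms ln_nrm_w_neg
  by (intro mono_floor_diff_floor_divide) (auto intro: divide_nonpos_neg)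

lemma ncoef_diff_unbounded:
  assumes "0 < r" "r < 1" "2 \<le> p"
  shows "\<exists>\<beta>. M \<le> ncoef nrm r w \<beta> - ncoef nrm (r powr (1 / real p)) w \<beta>"
  unfolding ncoef_diff_eq[OF assms(1)] using assms ln_nrm_w_neg
  by (intro floor_diff_floor_divide_unbounded) (auto intro: divide_neg_neg)

lemma fredholm_coeff_exists:
  fixes A :: "nat \<Rightarrow> nat \<Rightarrow> 'a" and g :: "nat \<Rightarrow> int"
  assumes rows: "\<And>k l. nrm (A k l) \<le> nrm w powi g k"
    and g: "mono g" "\<And>k. 0 \<le> g k" "\<And>M. \<exists>N. M \<le> g N"
  shows "\<exists>c. is_fredholm_coeff nrm A n c \<and> nrm c \<le> nrm w powi (\<Sum>k<n. g k)"
proof -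
  define Sets where "Sets = {S :: nat set. finite S \<and> card S = n}"
  define Sets_below :: "nat \<Rightarrow> nat set set"
    where "Sets_below N = {S. S \<subseteq> {..<N} \<and> card S = n}" for N
  have antimono: "nrm w powi b \<le> nrm w powi a" if "a \<le> b" for a b
    using that nrm_w_pos nrm_w_less_one by (intro power_int_decreasing) auto
  have minor: "nrm (pminor A S) \<le> nrm w powi (sum g S)" if "finite S" for S
    using nrm_pminor_le[of S A "\<lambda>k. nrm w powi g k"] that rows nrm_w_pos
    by (simp add: nrm_one power_int_sum)
  have tail: "nrm (pminor A S) \<le> nrm w powi g N" if "S \<in> Sets - Sets_below N" for S N
  proof -
    have "finite S" "\<not> S \<subseteq> {..<N}" using that unfolding Sets_def Sets_below_def by auto
    then obtain k where "k \<in> S" "N \<le> k" by (meson lessThan_iff not_le subsetI)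
    have "g N \<le> g k" using g(1) \<open>N \<le> k\<close> by (rule monoD)
    also have "g k \<le> sum g S" using \<open>finite S\<close> \<open>k \<in> S\<close> g(2) by (intro member_le_sum) auto
    finally show ?thesis using minor[OF \<open>finite S\<close>] antimono by (meson order_trans)
  qed
  have "\<exists>L. nrm_has_sum nrm (pminor A) Sets L"
  proof (rule nrm_has_sum_exhausting[OF complete])
    show "finite (Sets_below N)" for N
      unfolding Sets_below_def by (rule finite_subset[of _ "Pow {..<N}"]) auto
    show "Sets_below N \<subseteq> Sets" for N
      unfolding Sets_below_def Sets_def using finite_subset by blast
    show "mono Sets_below" unfolding Sets_below_def by (rule monoI) auto
    show "(\<lambda>N. nrm w powi g N) \<longlonglongrightarrow> 0"
      using nrm_w_pos nrm_w_less_one g(1,3) by (rule power_int_tendsto_0)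
  qed (use nrm_w_pos tail in auto)
  then obtain L where L: "nrm_has_sum nrm (pminor A) Sets L" ..
  have "nrm L \<le> nrm w powi (\<Sum>k<n. g k)"
  proof (rule nrm_has_sum_nrm_le[OF L])
    fix S assume "S \<in> Sets"
    then have "finite S" "(\<Sum>k<n. g k) \<le> sum g S"
      unfolding Sets_def using sum_lessThan_le_sum_card[OF g(1)] by auto
    then show "nrm (pminor A S) \<le> nrm w powi (\<Sum>k<n. g k)"
      using minor antimono by (meson order_trans)
  qed (use nrm_w_pos in simp)
  moreover have "nrm ((-1) ^ n * L) = nrm L"
    by (cases "even n") (simp_all add: nrm_minus)
  ultimately show ?thesis
    using L unfolding is_fredholm_coeff_def Sets_def by auto
qed

lemma row_exponent:
  assumes "0 < r" "r < 1" "2 \<le> p" "1 \<le> t"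
  defines "g \<equiv> \<lambda>k. ncoef nrm r w (k div t) - ncoef nrm (r powr (1 / real p)) w (k div t)"
  shows "mono g" and "0 \<le> g k" and "\<exists>N. M \<le> g N"
proof -
  define d where "d \<beta> = ncoef nrm r w \<beta> - ncoef nrm (r powr (1 / real p)) w \<beta>" for \<beta>
  have d: "mono d" "d 0 = 0"
    unfolding d_def using mono_ncoef_diff assms(1-3) by (auto simp: ncoef_def)
  show "mono g" unfolding g_def using d(1) by (simp add: d_def mono_def div_le_mono)
  show "0 \<le> g k" unfolding g_def using d by (metis d_def monoD zero_le)
  obtain \<beta> where "M \<le> d \<beta>" unfolding d_def using ncoef_diff_unbounded assms(1-3) by blast
  then have "M \<le> g (t * \<beta>)" unfolding g_def d_def using assms(4) by simp
  then show "\<exists>N. M \<le> g N" ..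
qed

end

theorem mainTheorem14:
  fixes p t :: nat and r :: real and nrm :: "'a::comm_ring_1 \<Rightarrow> real" and w :: 'a
    and f :: "(nat \<Rightarrow> nat \<Rightarrow> 'a) \<Rightarrow> (nat \<Rightarrow> nat \<Rightarrow> 'a)"
  assumes "prime p" and "odd p"
    and "banach_tate_Zp_alg p nrm w"
    and "noetherian TYPE('a)"
    and "\<not> (\<exists>x. 1 < nrm x \<and> nrm x < 1 / nrm w)"
    and "1 / real p \<le> r" and "r < 1"
    and "t \<ge> 1"
    and "\<forall>x\<in>Dsum nrm r t. f x \<in> Dsum nrm (r powr (1 / real p)) t"
    and "Rlinear_on (Dsum nrm r t) f"
    and "\<forall>x\<in>Dsum nrm r t. Dnorm nrm (r powr (1 / real p)) t (f x) \<le> Dnorm nrm r t x"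
  shows "(\<forall>i<t. \<forall>\<alpha>. \<forall>j<t. \<forall>\<beta>.
            nrm (f (ebasis nrm r w i \<alpha>) j \<beta> * w ^ nat (ncoef nrm r w \<beta>))
              \<le> nrm w powi (ncoef nrm r w \<beta> - ncoef nrm (r powr (1 / real p)) w \<beta>))
       \<and> (\<forall>n. \<exists>c. is_fredholm_coeff nrm (Umat nrm r w t f) n c
                  \<and> nrm c \<le> nrm w powi lam nrm r p t w n)"
proof (cases "(1::'a) = 0")
  case True
  interpret nonarch_norm nrm using assms(3) by unfold_locales (simp add: banach_tate_Zp_alg_def)
  have zero: "nrm x = 0" for x :: 'a using True by (metis mult_1 mult_zero_left nrm_zero)
  have "is_fredholm_coeff nrm A n 0" for A n
    unfolding is_fredholm_coeff_def nrm_has_sum_def by (auto simp: zero intro!: exI[of _ 0] exI[of _ "{}"])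
  then show ?thesis using zero by (auto simp: power_int_0_left_if)
next
  case False
  interpret tate_norm nrm w
    using assms(3) False by unfold_locales (auto simp: banach_tate_Zp_alg_def)
  define s where "s = r powr (1 / real p)"
  have p: "2 \<le> p" using assms(1) by (rule prime_ge_2_nat)
  then have r: "0 < r" "r \<le> 1" using assms(6,7) by (auto intro: less_le_trans[of 0 "1 / real p"])
  have s: "0 < s" "s \<le> 1" unfolding s_def using r by (auto intro: powr_le1)
  have coeff: "nrm (f (ebasis nrm r w i \<alpha>) j \<beta> * w ^ nat (ncoef nrm r w \<beta>))
      \<le> nrm w powi (ncoef nrm r w \<beta> - ncoef nrm s w \<beta>)" if "i < t" "j < t" for i \<alpha> j \<beta>
    using nrm_image_ebasis_coeff_le[OF assms(5) r s] assms(9,11) that by (simp add: s_def)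
  define g where "g = (\<lambda>k. ncoef nrm r w (k div t) - ncoef nrm s w (k div t))"
  have g: "mono g" "\<And>k. 0 \<le> g k" "\<And>M. \<exists>N. M \<le> g N"
    using row_exponent[OF r(1) assms(7) p assms(8)] unfolding g_def s_def by blast+
  have "lam nrm r p t w n = (\<Sum>k<n. g k)" for n
    by (induction n) (simp_all add: g_def s_def)
  moreover have "nrm (Umat nrm r w t f k l) \<le> nrm w powi g k" for k l
    using coeff assms(8) by (simp add: Umat_def g_def)
  ultimately show ?thesis using coeff fredholm_coeff_exists[OF _ g] by (simp add: s_def)
qed

end
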